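(* For every integer $t\ge 2$ and positive integers $d,k$ there exists an integer $m=m(t,k,d)\le k^{2^{d-1}}+t-1$ with the following property: the (unordered) $t$-tuples of every finite point set $S\subset\mathbb{R}^d$ can be $k$-colored such that every axis-parallel box in $\mathbb{R}^d$ that contains at least $m$ points of $S$ contains $t$-tuples of points of $S$ colored with each of the $k$ colors.
   Context: An axis-parallel closed halfspace in $\mathbb{R}^d$ is a set $\{\mathbf{p}\mid (\mathbf{p})_i\le\beta\}$ or $\{\mathbf{p}\mid (\mathbf{p})_i\ge\beta\}$ for some coordinate $1\le i\le d$ and real $\beta$; an axis-parallel box is an intersection of such halfspaces. A $t$-tuple of points of $S$ is a $t$-element subset of $S$; a box contains it if it contains all its points. *)

theory Defs
  imports "HOL-Analysis.Analysis"
begin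

definition axis_halfspace :: "(real ^ 'n) set \<Rightarrow> bool" where
  "axis_halfspace H \<longleftrightarrow>
     (\<exists>i \<beta>. H = {p. p $ i \<le> \<beta>} \<or> H = {p. p $ i \<ge> \<beta>})"

definition axis_box :: "(real ^ 'n) set \<Rightarrow> bool" where
  "axis_box B \<longleftrightarrow> (\<exists>\<H>. (\<forall>H\<in>\<H>. axis_halfspace H) \<and> B = \<Inter>\<H>)"

definition tuples :: "nat \<Rightarrow> 'a set \<Rightarrow> 'a set set" where
  "tuples t S = {T. T \<subseteq> S \<and> card T = t}"

end

theory Submission
  imports Defs "HOL-Library.List_Lexorder"
begin

(* Order S linearly, first by a fixed coordinate i0 and then arbitrarily. For points p before q,
   the set of coordinates in which q is smaller than p is a sign pattern s not containing i0, and
   for each of these 2^(d-1) patterns the pairs with pattern s form a strict partial order.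
   A product argument in the style of Erdos-Szekeres shows that more than k^(2^(d-1)) points
   contain a chain of k+1 points in one of these orders. A t-tuple is coloured by the length of
   the longest chain, in the order given by the pattern of its two smallest points a and b,
   leading from a to b, reduced mod k. Given a box with enough points, discard its t-2 largest
   points; the rest contains a longest chain c_0, ..., c_k. Every chain from c_0 to c_(j+1)
   stays in the box and below the discarded points, hence can be spliced into the longest chain,
   so the longest one has exactly j+2 points; adding the discarded points gives a tuple of colour j. *)

section \<open>Chains of a strict partial order\<close>

lemma sorted_wrt_irreflp_distinct:
  assumes "irreflp r" "sorted_wrt r xs"
  shows "distinct xs"
  using assms by (induction xs) (auto simp: irreflp_def)

lemma sorted_wrt_hd_rel:
  assumes "sorted_wrt r xs" "z \<in> set xs" "z \<noteq> hd xs"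
  shows "r (hd xs) z"
  using assms by (cases xs) auto

lemma sorted_wrt_rel_last:
  assumes "sorted_wrt r xs" "z \<in> set xs" "z \<noteq> last xs"
  shows "r z (last xs)"
proof -
  obtain ys where xs: "xs = ys @ [last xs]"
    using assms(2) by (metis append_butlast_last_id empty_iff list.set(1))
  have "z \<in> set ys" using assms(2,3) by (subst (asm) xs) auto
  moreover have "sorted_wrt r (ys @ [last xs])" using assms(1) by (subst (asm) xs)
  ultimately show ?thesis by (simp add: sorted_wrt_append)
qed

definition max_chain_len :: "('a \<Rightarrow> 'a \<Rightarrow> bool) \<Rightarrow> 'a set \<Rightarrow> ('a list \<Rightarrow> bool) \<Rightarrow> nat" where
  "max_chain_len r X P = Max {length xs | xs. sorted_wrt r xs \<and> set xs \<subseteq> X \<and> P xs}"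

lemma chain_length_le_card:
  assumes "irreflp r" "finite X" "sorted_wrt r xs" "set xs \<subseteq> X"
  shows "length xs \<le> card X"
  using assms by (metis card_mono distinct_card sorted_wrt_irreflp_distinct)

lemma finite_chain_lengths:
  assumes "irreflp r" "finite X"
  shows "finite {length xs | xs. sorted_wrt r xs \<and> set xs \<subseteq> X \<and> P xs}"
  by (rule finite_subset[of _ "{..card X}"]) (auto dest: chain_length_le_card[OF assms])

lemma max_chain_len_ge:
  assumes "irreflp r" "finite X" "sorted_wrt r xs" "set xs \<subseteq> X" "P xs"
  shows "length xs \<le> max_chain_len r X P"
  unfolding max_chain_len_def using assms by (intro Max_ge finite_chain_lengths) auto

lemma max_chain_len_attained:
  assumes "irreflp r" "finite X" "sorted_wrt r xs" "set xs \<subseteq> X" "P xs"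
  obtains ys where "sorted_wrt r ys" "set ys \<subseteq> X" "P ys" "length ys = max_chain_len r X P"
proof -
  have "max_chain_len r X P \<in> {length xs | xs. sorted_wrt r xs \<and> set xs \<subseteq> X \<and> P xs}"
    unfolding max_chain_len_def using assms by (intro Max_in finite_chain_lengths) auto
  then show ?thesis using that by auto
qed

lemma longest_chain_exists:
  assumes "irreflp r" "finite X"
  obtains cs where "sorted_wrt r cs" "set cs \<subseteq> X"
    "\<And>ys. sorted_wrt r ys \<Longrightarrow> set ys \<subseteq> X \<Longrightarrow> length ys \<le> length cs"
proof -
  obtain cs where cs: "sorted_wrt r cs" "set cs \<subseteq> X"
    and len: "length cs = max_chain_len r X (\<lambda>_. True)"
    using max_chain_len_attained[where xs = "[]" and P = "\<lambda>_. True", OF assms] by auto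
  show ?thesis
    using that[OF cs] max_chain_len_ge[where P = "\<lambda>_. True", OF assms] len by simp
qed

text \<open>If a longest chain \<open>cs\<close> of \<open>Q\<close> cannot be short-cut by leaving \<open>Q\<close>, its segment from
  \<open>cs ! 0\<close> to \<open>cs ! i\<close> is a longest chain between these two points: a longer one could be
  spliced into \<open>cs\<close>.\<close>

lemma max_chain_len_segment_of_longest:
  assumes "transp r" "irreflp r" "finite X" "Q \<subseteq> X"
    and cs: "sorted_wrt r cs" "set cs \<subseteq> Q"
    and longest: "\<And>ys. sorted_wrt r ys \<Longrightarrow> set ys \<subseteq> Q \<Longrightarrow> length ys \<le> length cs"
    and i: "i < length cs"
    and closed: "\<And>ys. sorted_wrt r ys \<Longrightarrow> set ys \<subseteq> X \<Longrightarrow> ys \<noteq> [] \<Longrightarrow>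
                   hd ys = cs ! 0 \<Longrightarrow> last ys = cs ! i \<Longrightarrow> set ys \<subseteq> Q"
  shows "max_chain_len r X (\<lambda>ys. ys \<noteq> [] \<and> hd ys = cs ! 0 \<and> last ys = cs ! i) = Suc i"
    (is "max_chain_len r X ?between = _")
proof -
  let ?prefix = "take (Suc i) cs" and ?suffix = "drop (Suc i) cs"
  have "hd ?prefix = cs ! 0" using i by (cases cs) auto
  moreover have "last ?prefix = cs ! i" using i by (simp add: take_Suc_conv_app_nth)
  moreover have "set ?prefix \<subseteq> X" using cs(2) assms(4) by (meson set_take_subset order_trans)
  ultimately have prefix: "sorted_wrt r ?prefix" "set ?prefix \<subseteq> X" "?between ?prefix"
    using cs(1) i by auto
  obtain ys where ys: "sorted_wrt r ys" "set ys \<subseteq> X" "?between ys"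
    and ys_len: "length ys = max_chain_len r X ?between"
    using max_chain_len_attained[where P = ?between, OF assms(2,3) prefix] .
  have "\<forall>x\<in>set ?prefix. \<forall>y\<in>set ?suffix. r x y"
    using cs(1) by (metis append_take_drop_id sorted_wrt_append)
  moreover have "cs ! i \<in> set ?prefix" using i by (simp add: take_Suc_conv_app_nth)
  ultimately have "r z w" if "z \<in> set ys" "w \<in> set ?suffix" for z w
    using sorted_wrt_rel_last[OF ys(1) that(1)] ys(3) that(2) \<open>transp r\<close>
    by (metis transpD)
  then have "sorted_wrt r (ys @ ?suffix)"
    using ys(1) cs(1) by (simp add: sorted_wrt_append)
  moreover have "set (ys @ ?suffix) \<subseteq> Q"
    using closed[OF ys(1,2)] ys(3) cs(2) by (auto dest: in_set_dropD)
  ultimately have "length ys \<le> Suc i" using longest[of "ys @ ?suffix"] i by simp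
  moreover have "Suc i \<le> length ys"
    using max_chain_len_ge[where P = ?between, OF assms(2,3) prefix] i ys_len by simp
  ultimately show ?thesis using ys_len by simp
qed

text \<open>Each point gets the vector of lengths of the longest chains ending in it, one for each
  order; comparable points get different vectors.\<close>

lemma long_chain_of_some_order:
  fixes r :: "'s \<Rightarrow> 'a \<Rightarrow> 'a \<Rightarrow> bool"
  assumes "finite \<Sigma>" "finite X"
    and trans: "\<And>s. s \<in> \<Sigma> \<Longrightarrow> transp (r s)" and irrefl: "\<And>s. s \<in> \<Sigma> \<Longrightarrow> irreflp (r s)"
    and comparable: "\<And>x y. x \<in> X \<Longrightarrow> y \<in> X \<Longrightarrow> x \<noteq> y \<Longrightarrow> \<exists>s\<in>\<Sigma>. r s x y \<or> r s y x"
    and big: "k ^ card \<Sigma> < card X"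
  shows "\<exists>s\<in>\<Sigma>. \<exists>xs. sorted_wrt (r s) xs \<and> set xs \<subseteq> X \<and> k < length xs"
proof (rule ccontr)
  assume short: "\<not> ?thesis"
  define L where "L s x = max_chain_len (r s) X (\<lambda>xs. xs \<noteq> [] \<and> last xs = x)" for s x
  have singleton: "sorted_wrt R [x]" for R :: "'a \<Rightarrow> 'a \<Rightarrow> bool" and x by simp
  have singleton_in: "set [x] \<subseteq> X" "[x] \<noteq> [] \<and> last [x] = x" if "x \<in> X" for x
    using that by auto
  have L_range: "L s x \<in> {1..k}" if s: "s \<in> \<Sigma>" and x: "x \<in> X" for s x
  proof -
    obtain xs where "sorted_wrt (r s) xs" "set xs \<subseteq> X" "length xs = L s x"
      using max_chain_len_attained[where P = "\<lambda>xs. xs \<noteq> [] \<and> last xs = x", OF irrefl[OF s] assms(2) singleton singleton_in[OF x]]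
      unfolding L_def by blast
    then have "L s x \<le> k" using short s by fastforce
    moreover have "1 \<le> L s x"
      using max_chain_len_ge[where P = "\<lambda>xs. xs \<noteq> [] \<and> last xs = x", OF irrefl[OF s] assms(2) singleton singleton_in[OF x]]
      unfolding L_def by simp
    ultimately show ?thesis by simp
  qed
  have L_less: "L s x < L s y" if s: "s \<in> \<Sigma>" and xy: "x \<in> X" "y \<in> X" "r s x y" for s x y
  proof -
    obtain xs where xs: "sorted_wrt (r s) xs" "set xs \<subseteq> X" "xs \<noteq> []" "last xs = x"
      and len: "length xs = L s x"
      using max_chain_len_attained[where P = "\<lambda>xs. xs \<noteq> [] \<and> last xs = x", OF irrefl[OF s] assms(2) singleton singleton_in[OF xy(1)]]
      unfolding L_def by blast
    have "r s z y" if "z \<in> set xs" for z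
      using sorted_wrt_rel_last[OF xs(1) that] xs(4) xy(3) trans[OF s]
      by (metis transpD)
    then have "sorted_wrt (r s) (xs @ [y])" using xs(1) by (simp add: sorted_wrt_append)
    then have "length (xs @ [y]) \<le> L s y"
      unfolding L_def using irrefl[OF s] assms(2) xs(2) xy(2)
      by (intro max_chain_len_ge) auto
    then show ?thesis using len by simp
  qed
  define f where "f x = restrict (\<lambda>s. L s x) \<Sigma>" for x
  have "inj_on f X"
  proof (rule inj_onI, rule ccontr)
    fix x y assume xy: "x \<in> X" "y \<in> X" "f x = f y" "x \<noteq> y"
    then obtain s where s: "s \<in> \<Sigma>" "r s x y \<or> r s y x" using comparable by blast
    then have "L s x \<noteq> L s y" using L_less xy by fastforce
    moreover have "L s x = L s y" using xy(3) s(1) unfolding f_def by (metis restrict_apply')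
    ultimately show False by simp
  qed
  moreover have "f ` X \<subseteq> PiE \<Sigma> (\<lambda>_. {1..k})" using L_range by (auto simp: f_def)
  ultimately have "card X \<le> card (PiE \<Sigma> (\<lambda>_. {1..k}))"
    using assms(1) by (intro card_inj_on_le finite_PiE) auto
  also have "\<dots> = k ^ card \<Sigma>" using assms(1) by (simp add: card_PiE)
  finally show False using big by simp
qed

lemma exists_top_subset:
  fixes f :: "'a \<Rightarrow> 'b::linorder"
  assumes "finite P" "inj_on f P" "n \<le> card P"
  shows "\<exists>R\<subseteq>P. card R = n \<and> (\<forall>x\<in>P - R. \<forall>y\<in>R. f x < f y)"
  using assms(3)
proof (induction n)
  case 0
  then show ?case by auto
next
  case (Suc n)
  then obtain R where R: "R \<subseteq> P" "card R = n" "\<forall>x\<in>P - R. \<forall>y\<in>R. f x < f y" by auto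
  have "card (P - R) = card P - n"
    using R(1,2) assms(1) by (simp add: card_Diff_subset finite_subset)
  then have "P - R \<noteq> {}" using Suc.prems card_gt_0_iff by fastforce
  then have "Max (f ` (P - R)) \<in> f ` (P - R)" using assms(1) by (intro Max_in) auto
  then obtain z where z: "z \<in> P - R" "f z = Max (f ` (P - R))" by (metis imageE)
  have "f x < f z" if x: "x \<in> P - R - {z}" for x
  proof -
    have "f x \<le> f z" using x z(2) assms(1) by simp
    moreover have "f x \<noteq> f z" using x z(1) inj_onD[OF assms(2)] by blast
    ultimately show ?thesis by simp
  qed
  then have "\<forall>x\<in>P - insert z R. \<forall>y\<in>insert z R. f x < f y" using R(3) by auto
  moreover have "card (insert z R) = Suc n"
    using z(1) R(1,2) assms(1) by (simp add: finite_subset)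
  ultimately show ?case using R(1) z(1) by blast
qed

section \<open>Sign patterns and boxes\<close>

definition decreasing_coords :: "real ^ 'n \<Rightarrow> real ^ 'n \<Rightarrow> 'n set" where
  "decreasing_coords p q = {i. q $ i < p $ i}"

lemma decreasing_coords_trans:
  assumes "decreasing_coords p q = s" "decreasing_coords q r = s"
  shows "decreasing_coords p r = s"
proof -
  have pq: "q $ i < p $ i \<longleftrightarrow> i \<in> s" and qr: "r $ i < q $ i \<longleftrightarrow> i \<in> s" for i
    using assms unfolding decreasing_coords_def by auto
  have "r $ i < p $ i \<longleftrightarrow> i \<in> s" for i
    using pq[of i] qr[of i] by (cases "i \<in> s") auto
  then show ?thesis unfolding decreasing_coords_def by auto
qed

lemma between_if_decreasing_coords_eq:
  assumes "decreasing_coords a z = decreasing_coords a b" "decreasing_coords z b = decreasing_coords a b"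
  shows "min (a $ j) (b $ j) \<le> z $ j \<and> z $ j \<le> max (a $ j) (b $ j)"
proof -
  have "j \<in> decreasing_coords a z \<longleftrightarrow> j \<in> decreasing_coords a b"
    "j \<in> decreasing_coords z b \<longleftrightarrow> j \<in> decreasing_coords a b"
    using assms by simp_all
  then have "z $ j < a $ j \<longleftrightarrow> b $ j < a $ j" "b $ j < z $ j \<longleftrightarrow> b $ j < a $ j"
    unfolding decreasing_coords_def by simp_all
  then show ?thesis by (cases "b $ j < a $ j") (auto simp: min_def max_def)
qed

lemma axis_box_between:
  assumes "axis_box B" "a \<in> B" "b \<in> B"
    and between: "\<And>j. min (a $ j) (b $ j) \<le> z $ j \<and> z $ j \<le> max (a $ j) (b $ j)"
  shows "z \<in> B"
proof -
  obtain \<H> where \<H>: "\<forall>H\<in>\<H>. axis_halfspace H" "B = \<Inter>\<H>"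
    using assms(1) unfolding axis_box_def by blast
  have "z \<in> H" if "H \<in> \<H>" for H
  proof -
    have a: "a \<in> H" and b: "b \<in> H" using assms(2,3) \<H>(2) that by auto
    have "axis_halfspace H" using \<H>(1) that by simp
    then obtain i \<beta> where "H = {p. p $ i \<le> \<beta>} \<or> H = {p. p $ i \<ge> \<beta>}"
      unfolding axis_halfspace_def by (elim exE) (rule that)
    then show ?thesis
    proof
      assume H: "H = {p. p $ i \<le> \<beta>}"
      have "z $ i \<le> max (a $ i) (b $ i)" using between by blast
      also have "\<dots> \<le> \<beta>" using a b H by simp
      finally show ?thesis using H by simp
    next
      assume H: "H = {p. p $ i \<ge> \<beta>}"
      have "\<beta> \<le> min (a $ i) (b $ i)" using a b H by simp
      also have "\<dots> \<le> z $ i" using between by blast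
      finally show ?thesis using H by simp
    qed
  qed
  then show ?thesis using \<H>(2) by blast
qed

section \<open>Colouring by longest sign chains\<close>

locale ordered_points =
  fixes S :: "(real ^ 'n) set" and key :: "real ^ 'n \<Rightarrow> 'k::linorder" and i0 :: 'n
  assumes finite_S: "finite S" and inj_key: "inj_on key S"
    and key_mono: "\<And>p q. key p < key q \<Longrightarrow> p $ i0 \<le> q $ i0"
begin

definition sign_rel :: "'n set \<Rightarrow> real ^ 'n \<Rightarrow> real ^ 'n \<Rightarrow> bool" where
  "sign_rel s p q \<longleftrightarrow> key p < key q \<and> decreasing_coords p q = s"

lemma transp_sign_rel: "transp (sign_rel s)"
proof (rule transpI)
  fix p q r assume "sign_rel s p q" "sign_rel s q r"
  then show "sign_rel s p r"
    unfolding sign_rel_def using decreasing_coords_trans[of p q s r] by auto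
qed

lemma irreflp_sign_rel: "irreflp (sign_rel s)"
  unfolding sign_rel_def by (auto intro: irreflpI)

lemma long_sign_chain:
  assumes "X \<subseteq> S" "k ^ 2 ^ (CARD('n) - 1) < card X"
  shows "\<exists>s xs. sorted_wrt (sign_rel s) xs \<and> set xs \<subseteq> X \<and> k < length xs"
proof -
  let ?\<Sigma> = "Pow (UNIV - {i0})"
  have "card ?\<Sigma> = 2 ^ (CARD('n) - 1)" by (simp add: card_Pow card_Diff_singleton)
  moreover have "\<exists>s\<in>?\<Sigma>. sign_rel s x y \<or> sign_rel s y x" if "x \<in> X" "y \<in> X" "x \<noteq> y" for x y
  proof -
    have ordered: "\<exists>s\<in>?\<Sigma>. sign_rel s p q" if "key p < key q" for p q
      using that key_mono[OF that] unfolding sign_rel_def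
      by (intro bexI[of _ "decreasing_coords p q"]) (auto simp: decreasing_coords_def)
    have "key x \<noteq> key y" using that assms(1) inj_onD[OF inj_key] by blast
    then show ?thesis using ordered by (metis linorder_neqE)
  qed
  moreover have "finite X" using assms(1) finite_S finite_subset by blast
  ultimately have "\<exists>s\<in>?\<Sigma>. \<exists>xs. sorted_wrt (sign_rel s) xs \<and> set xs \<subseteq> X \<and> k < length xs"
    using assms(2) by (intro long_chain_of_some_order transp_sign_rel irreflp_sign_rel) auto
  then show ?thesis by blast
qed

definition colour :: "nat \<Rightarrow> (real ^ 'n) set \<Rightarrow> nat" where
  "colour k T = (let a = arg_min_on key T; b = arg_min_on key (T - {a}) in
     (max_chain_len (sign_rel (decreasing_coords a b)) S
        (\<lambda>xs. xs \<noteq> [] \<and> hd xs = a \<and> last xs = b) - 2) mod k)"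

lemma colour_less: "0 < k \<Longrightarrow> colour k T < k"
  unfolding colour_def Let_def by simp

lemma arg_min_on_key_eqI:
  assumes "T \<subseteq> S" "a \<in> T" "\<And>x. x \<in> T \<Longrightarrow> key a \<le> key x"
  shows "arg_min_on key T = a"
  unfolding arg_min_on_def using assms inj_on_subset[OF inj_key assms(1)]
  by (intro arg_min_inj_eq) auto

lemma colour_eq:
  assumes "T \<subseteq> S" "a \<in> T" "b \<in> T" "key a < key b" "\<And>x. x \<in> T - {a, b} \<Longrightarrow> key b < key x"
  shows "colour k T = (max_chain_len (sign_rel (decreasing_coords a b)) S
                         (\<lambda>xs. xs \<noteq> [] \<and> hd xs = a \<and> last xs = b) - 2) mod k"
proof -
  have "key a \<le> key x" if "x \<in> T" for x
    using assms(4) assms(5)[of x] that by (cases "x = a \<or> x = b") auto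
  then have "arg_min_on key T = a"
    by (rule arg_min_on_key_eqI[OF assms(1,2)])
  moreover have "arg_min_on key (T - {a}) = b"
    using assms by (intro arg_min_on_key_eqI) (auto intro: less_imp_le)
  ultimately show ?thesis unfolding colour_def by simp
qed

text \<open>A chain of pattern \<open>s\<close> from \<open>a\<close> to \<open>b\<close> is coordinatewise between \<open>a\<close> and \<open>b\<close>, and it is
  below \<open>b\<close> in the key order.\<close>

lemma sign_chain_stays_in_box:
  assumes B: "axis_box B" and ab: "a \<in> S \<inter> B - R" "b \<in> S \<inter> B - R" "sign_rel s a b"
    and R_top: "\<forall>x\<in>S \<inter> B - R. \<forall>y\<in>R. key x < key y"
    and ys: "sorted_wrt (sign_rel s) ys" "set ys \<subseteq> S" "ys \<noteq> []" "hd ys = a" "last ys = b"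
  shows "set ys \<subseteq> S \<inter> B - R"
proof
  fix z assume z: "z \<in> set ys"
  show "z \<in> S \<inter> B - R"
  proof (cases "z = a \<or> z = b")
    case True
    then show ?thesis using ab by auto
  next
    case False
    then have az: "sign_rel s a z" and zb: "sign_rel s z b"
      using sorted_wrt_hd_rel[OF ys(1) z] sorted_wrt_rel_last[OF ys(1) z] ys(4,5) by auto
    then have "decreasing_coords a z = decreasing_coords a b" "decreasing_coords z b = decreasing_coords a b"
      using ab(3) unfolding sign_rel_def by auto
    moreover have "a \<in> B" "b \<in> B" using ab(1,2) by auto
    ultimately have "z \<in> B" using axis_box_between[OF B] between_if_decreasing_coords_eq by blast
    moreover have "z \<notin> R"
    proof
      assume "z \<in> R"
      then have "key b < key z" using R_top ab(2) by blast
      then show False using zb less_asym unfolding sign_rel_def by blast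
    qed
    ultimately show ?thesis using z ys(2) by auto
  qed
qed

lemma all_colours_in_box:
  assumes B: "axis_box B" and big: "k ^ 2 ^ (CARD('n) - 1) + t - 1 \<le> card (S \<inter> B)"
    and t: "2 \<le> t" and j: "j < k"
  shows "\<exists>T\<in>tuples t (S \<inter> B). colour k T = j"
proof -
  have fin: "finite (S \<inter> B)" using finite_S by simp
  have "t - 2 \<le> card (S \<inter> B)" using big t by linarith
  then obtain R where R: "R \<subseteq> S \<inter> B" "card R = t - 2"
    and R_top: "\<forall>x\<in>S \<inter> B - R. \<forall>y\<in>R. key x < key y"
    using exists_top_subset[OF fin inj_on_subset[OF inj_key]] by blast
  define Q where "Q = S \<inter> B - R"
  have QS: "Q \<subseteq> S" and finQ: "finite Q" using fin unfolding Q_def by auto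
  have "card Q = card (S \<inter> B) - (t - 2)"
    unfolding Q_def using card_Diff_subset[OF finite_subset[OF R(1) fin] R(1)] R(2) by simp
  then have big_Q: "k ^ 2 ^ (CARD('n) - 1) < card Q" using big t by linarith
  obtain s xs where xs: "sorted_wrt (sign_rel s) xs" "set xs \<subseteq> Q" "k < length xs"
    using long_sign_chain[OF QS big_Q] by blast
  obtain cs where cs: "sorted_wrt (sign_rel s) cs" "set cs \<subseteq> Q"
    and longest: "\<And>ys. sorted_wrt (sign_rel s) ys \<Longrightarrow> set ys \<subseteq> Q \<Longrightarrow> length ys \<le> length cs"
    using longest_chain_exists[OF irreflp_sign_rel finQ] by blast
  have j_cs: "Suc j < length cs" using longest[OF xs(1,2)] xs(3) j by simp
  define a b where "a = cs ! 0" and "b = cs ! Suc j"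
  have "0 < length cs" using j_cs by linarith
  then have "a \<in> set cs" "b \<in> set cs" using j_cs unfolding a_def b_def by simp_all
  then have ab: "a \<in> S \<inter> B - R" "b \<in> S \<inter> B - R" using cs(2) unfolding Q_def by auto
  have ab_rel: "sign_rel s a b"
    using sorted_wrt_nth_less[OF cs(1), of 0 "Suc j"] j_cs unfolding a_def b_def by simp
  have closed: "set ys \<subseteq> Q"
    if "sorted_wrt (sign_rel s) ys" "set ys \<subseteq> S" "ys \<noteq> []" "hd ys = a" "last ys = b" for ys
    using sign_chain_stays_in_box[OF B ab ab_rel R_top that] unfolding Q_def .
  have "max_chain_len (sign_rel s) S (\<lambda>ys. ys \<noteq> [] \<and> hd ys = a \<and> last ys = b) = Suc (Suc j)"
    unfolding a_def b_def
    by (rule max_chain_len_segment_of_longest[OF transp_sign_rel irreflp_sign_rel finite_S QS cs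
          longest j_cs closed[unfolded a_def b_def]])
  moreover have "decreasing_coords a b = s" using ab_rel unfolding sign_rel_def by simp
  moreover have "colour k (insert a (insert b R)) = (max_chain_len (sign_rel (decreasing_coords a b)) S
                     (\<lambda>xs. xs \<noteq> [] \<and> hd xs = a \<and> last xs = b) - 2) mod k"
  proof (rule colour_eq)
    show "key a < key b" using ab_rel unfolding sign_rel_def by simp
    show "key b < key x" if "x \<in> insert a (insert b R) - {a, b}" for x
      using R_top ab(2) that by blast
  qed (use ab R(1) in auto)
  moreover have "insert a (insert b R) \<in> tuples t (S \<inter> B)"
  proof -
    have "a \<noteq> b" using ab_rel irreflp_sign_rel by (auto simp: irreflp_def)
    then have "card (insert a (insert b R)) = Suc (Suc (t - 2))"
      using ab R finite_subset[OF R(1) fin] by simp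
    then show ?thesis using ab R(1) t unfolding tuples_def by auto
  qed
  ultimately show ?thesis using j by auto
qed

end

theorem theorem8:
  fixes t k :: nat
  assumes "t \<ge> 2" and "k \<ge> 1"
  shows "\<exists>m::nat. m \<le> k ^ (2 ^ (CARD('n) - 1)) + t - 1 \<and>
    (\<forall>S :: (real ^ 'n) set. finite S \<longrightarrow>
      (\<exists>c :: (real ^ 'n) set \<Rightarrow> nat.
         (\<forall>T\<in>tuples t S. c T < k) \<and>
         (\<forall>B. axis_box B \<and> card (S \<inter> B) \<ge> m \<longrightarrow>
            (\<forall>j<k. \<exists>T\<in>tuples t (S \<inter> B). c T = j))))"
proof -
  have "\<exists>c :: (real ^ 'n) set \<Rightarrow> nat. (\<forall>T\<in>tuples t S. c T < k) \<and>
          (\<forall>B. axis_box B \<and> card (S \<inter> B) \<ge> k ^ (2 ^ (CARD('n) - 1)) + t - 1 \<longrightarrow>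
            (\<forall>j<k. \<exists>T\<in>tuples t (S \<inter> B). c T = j))"
    if "finite S" for S :: "(real ^ 'n) set"
  proof -
    fix i0 :: 'n
    \<comment> \<open>lists are ordered lexicographically: by the \<open>i0\<close>-coordinate, then by an enumeration of \<open>S\<close>\<close>
    interpret ordered_points S "\<lambda>p. [p $ i0, real (to_nat_on S p)]" i0
    proof
      show "inj_on (\<lambda>p. [p $ i0, real (to_nat_on S p)]) S"
        using \<open>finite S\<close> by (intro inj_onI) (auto simp: countable_finite)
    qed (use \<open>finite S\<close> in \<open>auto simp: less_le\<close>)
    show ?thesis
      using all_colours_in_box colour_less assms by (intro exI[of _ "colour k"]) auto
  qed
  then show ?thesis by blast
qed

end
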